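(* There is a norm $\|\cdot\|$ on $c_{00}$ satisfying, for every $x\in c_{00}$, the implicit equation $$\|x\|=\max\Big\{\|x\|_\infty,\ \sup\Big\{\frac1{f(\ell)}\sum_{i=1}^\ell |||E_ix|||_{m_i}:\ \ell\in\mathbb{N},\ ((m_i,E_i))_{i=1}^\ell\ \text{admissible}\Big\}\Big\},$$ where for $m\ge2$, $|||\cdot|||_m$ is the norm on $c_{00}$ given by $|||x|||_m=\sup\{\frac1m\sum_{i=1}^m\|F_ix\|:F_1<\cdots<F_m\}$.
   Context: $c_{00}$ is the space of finitely supported real sequences on $\mathbb{N}$; $\|x\|_\infty=\max_i|x(i)|$. For $t>0$, $f(t)=\log_2(t+1)$. For $E,F\subseteq\mathbb{N}$, $E<F$ means $\max E<\min F$, and $Ex$ is the restriction of $x$ to $E$ ($Ex(i)=x(i)$ for $i\in E$, $0$ otherwise). A finite sequence of pairs $((m_i,E_i))_{i=1}^k$, with integers $m_1<\cdots<m_k$ and finite subsets $E_1<\cdots<E_k$ of $\mathbb{N}$, is admissible if $m_1\ge2$ and $f(m_{i+1})>\sum_{j=1}^i|E_j|$ for $1\le i<k$. *)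

theory Defs
  imports Complex_Main
begin

definition c00 :: "(nat \<Rightarrow> real) set" where
  "c00 = {x. finite {i. x i \<noteq> 0}}"

definition supnorm :: "(nat \<Rightarrow> real) \<Rightarrow> real" where
  "supnorm x = Max (insert 0 ((\<lambda>i. \<bar>x i\<bar>) ` {i. x i \<noteq> 0}))"

definition fdef :: "real \<Rightarrow> real" where
  "fdef t = log 2 (t + 1)"

definition restr :: "nat set \<Rightarrow> (nat \<Rightarrow> real) \<Rightarrow> (nat \<Rightarrow> real)" where
  "restr E x = (\<lambda>i. if i \<in> E then x i else 0)"

definition set_less :: "nat set \<Rightarrow> nat set \<Rightarrow> bool" where
  "set_less E F \<longleftrightarrow> finite E \<and> finite F \<and> E \<noteq> {} \<and> F \<noteq> {} \<and> Max E < Min F"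

definition block_seq :: "nat \<Rightarrow> (nat \<Rightarrow> nat set) \<Rightarrow> bool" where
  "block_seq m F \<longleftrightarrow> (\<forall>i\<in>{1..m}. finite (F i) \<and> F i \<noteq> {}) \<and>
     (\<forall>i\<in>{1..<m}. set_less (F i) (F (Suc i)))"

definition tnorm :: "((nat \<Rightarrow> real) \<Rightarrow> real) \<Rightarrow> nat \<Rightarrow> (nat \<Rightarrow> real) \<Rightarrow> real" where
  "tnorm N m x = Sup {(\<Sum>i=1..m. N (restr (F i) x)) / real m | F. block_seq m F}"

definition admissible :: "nat \<Rightarrow> (nat \<Rightarrow> nat) \<Rightarrow> (nat \<Rightarrow> nat set) \<Rightarrow> bool" where
  "admissible k m E \<longleftrightarrow> k \<ge> 1 \<and> m 1 \<ge> 2 \<and>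
     (\<forall>i\<in>{1..<k}. m i < m (Suc i)) \<and> block_seq k E \<and>
     (\<forall>i\<in>{1..<k}. fdef (real (m (Suc i))) > real (\<Sum>j=1..i. card (E j)))"

definition adm_set :: "((nat \<Rightarrow> real) \<Rightarrow> real) \<Rightarrow> (nat \<Rightarrow> real) \<Rightarrow> real set" where
  "adm_set N x = {(\<Sum>i=1..k. tnorm N (m i) (restr (E i) x)) / fdef (real k) | k m E.
                    admissible k m E}"

definition is_norm_c00 :: "((nat \<Rightarrow> real) \<Rightarrow> real) \<Rightarrow> bool" where
  "is_norm_c00 N \<longleftrightarrow>
     (\<forall>x\<in>c00. N x \<ge> 0 \<and> (N x = 0 \<longleftrightarrow> x = (\<lambda>_. 0))) \<and>
     (\<forall>x\<in>c00. \<forall>c. N (\<lambda>i. c * x i) = \<bar>c\<bar> * N x) \<and>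
     (\<forall>x\<in>c00. \<forall>y\<in>c00. N (\<lambda>i. x i + y i) \<le> N x + N y)"

end

theory Submission
  imports Defs
begin

text \<open>The right-hand side \<open>\<Phi>(N) = max(\<parallel>\<cdot>\<parallel>\<^sub>\<infinity>, sup over admissible families)\<close> of the implicit
equation is monotone in \<open>N\<close> and maps norms squeezed between the sup norm and the \<open>\<ell>\<^sub>1\<close> norm
to norms of the same kind; this class is closed under pointwise suprema of nonempty families.
Hence, as in the Knaster--Tarski theorem, the pointwise supremum of all such norms \<open>N\<close> with
\<open>N \<le> \<Phi>(N)\<close> (the sup norm is one) is a fixed point of \<open>\<Phi>\<close>.\<close>

lemma fixpoint_of_SUP_closed_monotone:
  fixes \<Phi> :: "('a \<Rightarrow> 'b::conditionally_complete_lattice) \<Rightarrow> 'a \<Rightarrow> 'b"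
  assumes bounded: "\<And>N x. N \<in> C \<Longrightarrow> x \<in> D \<Longrightarrow> N x \<le> B x"
    and SUP_closed: "\<And>S. S \<noteq> {} \<Longrightarrow> S \<subseteq> C \<Longrightarrow> (\<lambda>x. SUP N\<in>S. N x) \<in> C"
    and maps_to: "\<And>N. N \<in> C \<Longrightarrow> \<Phi> N \<in> C"
    and mono: "\<And>N N' x. N \<in> C \<Longrightarrow> N' \<in> C \<Longrightarrow> \<forall>y\<in>D. N y \<le> N' y \<Longrightarrow> x \<in> D \<Longrightarrow>
                  \<Phi> N x \<le> \<Phi> N' x"
    and start: "N\<^sub>0 \<in> C" "\<And>x. x \<in> D \<Longrightarrow> N\<^sub>0 x \<le> \<Phi> N\<^sub>0 x"
  shows "\<exists>N\<in>C. \<forall>x\<in>D. N x = \<Phi> N x"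
proof -
  define S where "S = {N \<in> C. \<forall>x\<in>D. N x \<le> \<Phi> N x}"
  define M where "M = (\<lambda>x. SUP N\<in>S. N x)"
  have M_eq: "M x = (SUP N\<in>S. N x)" for x by (simp add: M_def)
  have "S \<noteq> {}" "S \<subseteq> C"
    using start by (auto simp: S_def)
  then have M: "M \<in> C"
    unfolding M_def by (rule SUP_closed)
  have M_upper: "N x \<le> M x" if "N \<in> S" "x \<in> D" for N x
    unfolding M_eq using that bounded \<open>S \<subseteq> C\<close>
    by (intro cSUP_upper bdd_aboveI[of _ "B x"]) auto
  have M_post: "M x \<le> \<Phi> M x" if x: "x \<in> D" for x
  proof -
    have "N x \<le> \<Phi> M x" if "N \<in> S" for N
    proof -
      have "N x \<le> \<Phi> N x" using that x by (simp add: S_def)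
      also have "\<Phi> N x \<le> \<Phi> M x" using that x M M_upper by (auto simp: S_def intro!: mono)
      finally show ?thesis .
    qed
    then show ?thesis using \<open>S \<noteq> {}\<close> by (simp add: M_eq cSUP_least)
  qed
  have "\<Phi> M \<in> S"
    using M M_post maps_to mono by (auto simp: S_def)
  then have "\<forall>x\<in>D. M x = \<Phi> M x"
    using M_post M_upper by (auto intro: order.antisym)
  with M show ?thesis by blast
qed

lemma c00_restr: "x \<in> c00 \<Longrightarrow> restr E x \<in> c00"
  unfolding c00_def restr_def by (auto elim: rev_finite_subset)

lemma c00_scale: "x \<in> c00 \<Longrightarrow> (\<lambda>i. c * x i) \<in> c00"
  unfolding c00_def by (auto elim: rev_finite_subset)

lemma c00_add: "x \<in> c00 \<Longrightarrow> y \<in> c00 \<Longrightarrow> (\<lambda>i. x i + y i) \<in> c00"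
  unfolding c00_def by (auto intro: rev_finite_subset[of "{i. x i \<noteq> 0} \<union> {i. y i \<noteq> 0}"])

lemma restr_scale: "restr E (\<lambda>i. c * x i) = (\<lambda>i. c * restr E x i)"
  by (auto simp: restr_def)

lemma restr_add: "restr E (\<lambda>i. x i + y i) = (\<lambda>i. restr E x i + restr E y i)"
  by (auto simp: restr_def)

lemma abs_le_supnorm: "x \<in> c00 \<Longrightarrow> \<bar>x i\<bar> \<le> supnorm x"
  unfolding supnorm_def c00_def by (cases "x i = 0") auto

lemma supnorm_nonneg: "x \<in> c00 \<Longrightarrow> 0 \<le> supnorm x"
  unfolding supnorm_def c00_def by auto

lemma supnorm_least: "x \<in> c00 \<Longrightarrow> 0 \<le> B \<Longrightarrow> (\<And>i. \<bar>x i\<bar> \<le> B) \<Longrightarrow> supnorm x \<le> B"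
  unfolding supnorm_def c00_def by auto

lemma supnorm_eq_0D: "x \<in> c00 \<Longrightarrow> supnorm x = 0 \<Longrightarrow> x = (\<lambda>_. 0)"
  using abs_le_supnorm by fastforce

definition l1norm :: "(nat \<Rightarrow> real) \<Rightarrow> real" where
  "l1norm x = (\<Sum>i | x i \<noteq> 0. \<bar>x i\<bar>)"

lemma supnorm_le_l1norm: "x \<in> c00 \<Longrightarrow> supnorm x \<le> l1norm x"
proof (rule supnorm_least)
  show "0 \<le> l1norm x" unfolding l1norm_def by (simp add: sum_nonneg)
  show "\<bar>x i\<bar> \<le> l1norm x" if "x \<in> c00" for i
    using that unfolding l1norm_def c00_def
    by (cases "x i = 0") (auto intro: member_le_sum sum_nonneg)
qed

lemma set_less_trans: "set_less A B \<Longrightarrow> set_less B C \<Longrightarrow> set_less A C"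
  unfolding set_less_def by (meson Max_ge Min_in order.strict_trans1 order.strict_trans)

lemma block_seq_set_less:
  assumes "block_seq m F" "1 \<le> i" "i < j" "j \<le> m"
  shows "set_less (F i) (F j)"
  using \<open>i < j\<close> assms
  by (induction i j rule: less_Suc_induct) (auto simp: block_seq_def intro: set_less_trans)

lemma block_seq_disjoint:
  assumes "block_seq m F" "i \<in> {1..m}" "j \<in> {1..m}" "i \<noteq> j"
  shows "F i \<inter> F j = {}"
proof -
  have disjoint: "A \<inter> B = {}" if "set_less A B" for A B
    using that unfolding set_less_def by (meson Max_ge Min_le disjoint_iff not_le order.strict_trans2)
  show ?thesis
  proof (cases "i < j")
    case True
    then show ?thesis using assms disjoint[OF block_seq_set_less[OF assms(1)]] by auto
  next
    case False
    then have "j < i" using \<open>i \<noteq> j\<close> by simp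
    then show ?thesis using assms disjoint[OF block_seq_set_less[OF assms(1)]] by (auto simp: Int_commute)
  qed
qed

lemma sum_l1norm_restr_le:
  assumes "block_seq m F" "x \<in> c00"
  shows "(\<Sum>j=1..m. l1norm (restr (F j) x)) \<le> l1norm x"
proof -
  define A where "A = {i. x i \<noteq> 0}"
  have "finite A" using \<open>x \<in> c00\<close> by (simp add: A_def c00_def)
  have "(\<Sum>j=1..m. l1norm (restr (F j) x)) = (\<Sum>j=1..m. \<Sum>i\<in>A \<inter> F j. \<bar>x i\<bar>)"
    unfolding l1norm_def A_def restr_def by (intro sum.cong) (auto intro: sum.cong)
  also have "\<dots> = (\<Sum>i\<in>(\<Union>j\<in>{1..m}. A \<inter> F j). \<bar>x i\<bar>)"
    using \<open>finite A\<close> block_seq_disjoint[OF \<open>block_seq m F\<close>]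
    by (intro sum.UNION_disjoint[symmetric]) blast+
  also have "\<dots> \<le> (\<Sum>i\<in>A. \<bar>x i\<bar>)"
    using \<open>finite A\<close> by (intro sum_mono2) auto
  finally show ?thesis by (simp add: l1norm_def A_def)
qed

definition l1_dominated_seminorm :: "((nat \<Rightarrow> real) \<Rightarrow> real) \<Rightarrow> bool" where
  "l1_dominated_seminorm T \<longleftrightarrow> (\<forall>x\<in>c00. 0 \<le> T x \<and> T x \<le> l1norm x \<and>
      (\<forall>c. T (\<lambda>i. c * x i) = \<bar>c\<bar> * T x) \<and>
      (\<forall>y\<in>c00. T (\<lambda>i. x i + y i) \<le> T x + T y))"

lemma l1_dominated_seminormD:
  assumes "l1_dominated_seminorm T" "x \<in> c00"
  shows "0 \<le> T x" "T x \<le> l1norm x" "T (\<lambda>i. c * x i) = \<bar>c\<bar> * T x"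
    "y \<in> c00 \<Longrightarrow> T (\<lambda>i. x i + y i) \<le> T x + T y"
  using assms unfolding l1_dominated_seminorm_def by auto

lemma abs_homogeneous_if_le:
  assumes nonneg: "\<And>x. x \<in> c00 \<Longrightarrow> 0 \<le> T x"
    and le: "\<And>x c. x \<in> c00 \<Longrightarrow> T (\<lambda>i. c * x i) \<le> \<bar>c\<bar> * T x"
    and "x \<in> c00"
  shows "T (\<lambda>i. c * x i) = \<bar>c\<bar> * T x"
proof (cases "c = 0")
  case True
  then show ?thesis using le[OF \<open>x \<in> c00\<close>, of 0] nonneg[OF c00_scale[OF \<open>x \<in> c00\<close>, of 0]] by simp
next
  case False
  have "(\<lambda>i. inverse c * (c * x i)) = x" using False by (simp add: fun_eq_iff)
  then have "T x = T (\<lambda>i. inverse c * (c * x i))" by simp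
  also have "\<dots> \<le> \<bar>inverse c\<bar> * T (\<lambda>i. c * x i)" by (rule le[OF c00_scale[OF \<open>x \<in> c00\<close>]])
  finally have "\<bar>c\<bar> * T x \<le> T (\<lambda>i. c * x i)"
    using False by (simp add: field_simps)
  with le[OF \<open>x \<in> c00\<close>, of c] show ?thesis by simp
qed

lemma l1_dominated_seminorm_supnorm: "l1_dominated_seminorm supnorm"
proof -
  have scale: "supnorm (\<lambda>i. c * x i) \<le> \<bar>c\<bar> * supnorm x" if "x \<in> c00" for x c
    using that by (intro supnorm_least)
      (auto simp: c00_scale supnorm_nonneg abs_mult abs_le_supnorm mult_left_mono)
  have "supnorm (\<lambda>i. x i + y i) \<le> supnorm x + supnorm y" if "x \<in> c00" "y \<in> c00" for x y
    using that by (intro supnorm_least)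
      (auto simp: c00_add supnorm_nonneg intro!: order_trans[OF abs_triangle_ineq] add_mono abs_le_supnorm)
  then show ?thesis
    unfolding l1_dominated_seminorm_def
    by (auto simp: supnorm_nonneg supnorm_le_l1norm scale
        intro: abs_homogeneous_if_le[where T = supnorm])
qed

lemma bdd_above_l1_dominated:
  "(\<And>i. i \<in> I \<Longrightarrow> l1_dominated_seminorm (T i)) \<Longrightarrow> x \<in> c00 \<Longrightarrow> bdd_above ((\<lambda>i. T i x) ` I)"
  by (rule bdd_aboveI[of _ "l1norm x"]) (auto dest: l1_dominated_seminormD(2))

lemma l1_dominated_seminorm_SUP:
  assumes "I \<noteq> {}" and T: "\<And>i. i \<in> I \<Longrightarrow> l1_dominated_seminorm (T i)"
  shows "l1_dominated_seminorm (\<lambda>x. SUP i\<in>I. T i x)"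
proof -
  have upper: "T i x \<le> (SUP i\<in>I. T i x)" if "i \<in> I" "x \<in> c00" for i x
    using that by (intro cSUP_upper bdd_above_l1_dominated T)
  from \<open>I \<noteq> {}\<close> obtain i\<^sub>0 where "i\<^sub>0 \<in> I" by blast
  have nonneg: "0 \<le> (SUP i\<in>I. T i x)" if "x \<in> c00" for x
    using l1_dominated_seminormD(1)[OF T[OF \<open>i\<^sub>0 \<in> I\<close>] that] upper[OF \<open>i\<^sub>0 \<in> I\<close> that]
    by linarith
  have scale: "(SUP i\<in>I. T i (\<lambda>j. c * x j)) \<le> \<bar>c\<bar> * (SUP i\<in>I. T i x)" if "x \<in> c00" for x c
  proof (rule cSUP_least[OF \<open>I \<noteq> {}\<close>])
    fix i assume "i \<in> I"
    show "T i (\<lambda>j. c * x j) \<le> \<bar>c\<bar> * (SUP i\<in>I. T i x)"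
      using l1_dominated_seminormD(3)[OF T[OF \<open>i \<in> I\<close>] that] upper[OF \<open>i \<in> I\<close> that]
      by (simp add: mult_left_mono)
  qed
  have add: "(SUP i\<in>I. T i (\<lambda>j. x j + y j)) \<le> (SUP i\<in>I. T i x) + (SUP i\<in>I. T i y)"
    if "x \<in> c00" "y \<in> c00" for x y
    using that \<open>I \<noteq> {}\<close>
    by (intro cSUP_least) (auto intro: order_trans[OF l1_dominated_seminormD(4)[OF T]] add_mono upper)
  have "(SUP i\<in>I. T i x) \<le> l1norm x" if "x \<in> c00" for x
    using that \<open>I \<noteq> {}\<close> by (auto intro: cSUP_least l1_dominated_seminormD(2)[OF T])
  then show ?thesis
    unfolding l1_dominated_seminorm_def
    using nonneg add abs_homogeneous_if_le[where T = "\<lambda>x. SUP i\<in>I. T i x", OF nonneg scale]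
    by blast
qed

lemma SUP_mono_l1_dominated:
  assumes "I \<noteq> {}" "\<And>i. i \<in> I \<Longrightarrow> l1_dominated_seminorm (T' i)"
    and "\<And>i. i \<in> I \<Longrightarrow> T i x \<le> T' i x" "x \<in> c00"
  shows "(SUP i\<in>I. T i x) \<le> (SUP i\<in>I. T' i x)"
  using assms by (intro cSUP_mono bdd_above_l1_dominated) auto

definition block_avg ::
    "(nat \<Rightarrow> (nat \<Rightarrow> real) \<Rightarrow> real) \<Rightarrow> (nat \<Rightarrow> nat set) \<Rightarrow> nat \<Rightarrow> real \<Rightarrow> (nat \<Rightarrow> real) \<Rightarrow> real"
  where "block_avg T E k w x = (\<Sum>i=1..k. T i (restr (E i) x)) / w"

text \<open>The case \<open>w = 0\<close> covers \<^term>\<open>tnorm N 0\<close>, where division by zero makes every average 0.\<close>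

lemma l1_dominated_seminorm_block_avg:
  assumes T: "\<And>i. i \<in> {1..k} \<Longrightarrow> l1_dominated_seminorm (T i)"
    and "block_seq k E" and w: "w = 0 \<or> 1 \<le> w"
  shows "l1_dominated_seminorm (block_avg T E k w)"
proof -
  let ?S = "\<lambda>x. \<Sum>i=1..k. T i (restr (E i) x)"
  have nonneg: "0 \<le> ?S x" if "x \<in> c00" for x
    using that by (intro sum_nonneg) (simp add: l1_dominated_seminormD(1)[OF T] c00_restr)
  have sum_le_l1: "?S x \<le> l1norm x" if "x \<in> c00" for x
  proof -
    have "?S x \<le> (\<Sum>i=1..k. l1norm (restr (E i) x))"
      using that by (intro sum_mono) (simp add: l1_dominated_seminormD(2)[OF T] c00_restr)
    also have "\<dots> \<le> l1norm x"
      using sum_l1norm_restr_le[OF \<open>block_seq k E\<close> that] .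
    finally show ?thesis .
  qed
  have "a / w \<le> a" if "0 \<le> a" for a
    using w that by (auto simp: divide_le_eq mult_le_cancel_left1)
  with nonneg sum_le_l1 have le_l1: "?S x / w \<le> l1norm x" if "x \<in> c00" for x
    using that by (meson order_trans)
  have "?S (\<lambda>j. c * x j) = \<bar>c\<bar> * ?S x" if "x \<in> c00" for x c
    using that by (simp add: restr_scale l1_dominated_seminormD(3)[OF T] c00_restr sum_distrib_left)
  moreover have "?S (\<lambda>j. x j + y j) \<le> ?S x + ?S y" if "x \<in> c00" "y \<in> c00" for x y
    unfolding restr_add sum.distrib[symmetric] using that
    by (intro sum_mono) (simp add: l1_dominated_seminormD(4)[OF T] c00_restr)
  then have "?S (\<lambda>j. x j + y j) / w \<le> ?S x / w + ?S y / w" if "x \<in> c00" "y \<in> c00" for x y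
    using that w by (auto simp: add_divide_distrib[symmetric] intro: divide_right_mono)
  ultimately show ?thesis
    unfolding l1_dominated_seminorm_def block_avg_def using nonneg le_l1 w by auto
qed

lemma block_avg_mono:
  assumes "\<And>i z. i \<in> {1..k} \<Longrightarrow> z \<in> c00 \<Longrightarrow> T i z \<le> T' i z" "0 \<le> w" "x \<in> c00"
  shows "block_avg T E k w x \<le> block_avg T' E k w x"
  unfolding block_avg_def using assms by (intro divide_right_mono sum_mono) (auto simp: c00_restr)

lemma tnorm_eq_SUP: "tnorm N m = (\<lambda>x. SUP F\<in>{F. block_seq m F}. block_avg (\<lambda>_. N) F m (real m) x)"
  by (simp add: fun_eq_iff tnorm_def block_avg_def image_Collect)

lemma block_seq_singletons: "block_seq m (\<lambda>j. {j})"
  unfolding block_seq_def set_less_def by auto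

lemma l1_dominated_seminorm_tnorm:
  "l1_dominated_seminorm N \<Longrightarrow> l1_dominated_seminorm (tnorm N m)"
  unfolding tnorm_eq_SUP using block_seq_singletons
  by (intro l1_dominated_seminorm_SUP l1_dominated_seminorm_block_avg) (auto simp: Suc_le_eq)

lemma tnorm_mono:
  assumes "l1_dominated_seminorm N'" "\<And>z. z \<in> c00 \<Longrightarrow> N z \<le> N' z" "x \<in> c00"
  shows "tnorm N m x \<le> tnorm N' m x"
  unfolding tnorm_eq_SUP using assms block_seq_singletons
  by (intro SUP_mono_l1_dominated l1_dominated_seminorm_block_avg block_avg_mono)
    (auto simp: Suc_le_eq)

definition adm_avg ::
    "((nat \<Rightarrow> real) \<Rightarrow> real) \<Rightarrow> nat \<times> (nat \<Rightarrow> nat) \<times> (nat \<Rightarrow> nat set) \<Rightarrow> (nat \<Rightarrow> real) \<Rightarrow> real"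
  where "adm_avg N a = (case a of (k, m, E) \<Rightarrow> block_avg (\<lambda>i. tnorm N (m i)) E k (fdef (real k)))"

lemma adm_set_eq_image: "adm_set N x = (\<lambda>a. adm_avg N a x) ` {(k, m, E). admissible k m E}"
  unfolding adm_set_def adm_avg_def block_avg_def by force

lemma one_le_fdef: "1 \<le> k \<Longrightarrow> 1 \<le> fdef (real k)"
  unfolding fdef_def by simp

lemma l1_dominated_seminorm_adm_avg:
  assumes "l1_dominated_seminorm N" "admissible k m E"
  shows "l1_dominated_seminorm (adm_avg N (k, m, E))"
  using assms one_le_fdef[of k] unfolding adm_avg_def admissible_def
  by (auto intro: l1_dominated_seminorm_block_avg l1_dominated_seminorm_tnorm)

lemma admissible_singleton: "admissible 1 (\<lambda>_. 2) (\<lambda>_. {0})"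
  unfolding admissible_def block_seq_def by auto

lemma bdd_above_adm_set: "l1_dominated_seminorm N \<Longrightarrow> x \<in> c00 \<Longrightarrow> bdd_above (adm_set N x)"
  unfolding adm_set_eq_image by (intro bdd_above_l1_dominated) (auto intro: l1_dominated_seminorm_adm_avg)

lemma l1_dominated_seminorm_Sup_adm_set:
  "l1_dominated_seminorm N \<Longrightarrow> l1_dominated_seminorm (\<lambda>x. Sup (adm_set N x))"
  unfolding adm_set_eq_image using admissible_singleton
  by (intro l1_dominated_seminorm_SUP) (auto intro: l1_dominated_seminorm_adm_avg)

lemma Sup_adm_set_mono:
  assumes "l1_dominated_seminorm N'" "\<And>z. z \<in> c00 \<Longrightarrow> N z \<le> N' z" "x \<in> c00"
  shows "Sup (adm_set N x) \<le> Sup (adm_set N' x)"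
  unfolding adm_set_eq_image
proof (rule SUP_mono_l1_dominated)
  show "{(k, m, E). admissible k m E} \<noteq> {}"
    using admissible_singleton by blast
  fix a assume "a \<in> {(k, m, E). admissible k m E}"
  then obtain k m E where a: "a = (k, m, E)" "admissible k m E" by blast
  then show "l1_dominated_seminorm (adm_avg N' a)"
    using assms(1) by (simp add: l1_dominated_seminorm_adm_avg)
  have "0 \<le> fdef (real k)"
    using a one_le_fdef[of k] by (simp add: admissible_def)
  then show "adm_avg N a x \<le> adm_avg N' a x"
    unfolding a adm_avg_def using assms by (auto intro!: block_avg_mono tnorm_mono)
qed (rule assms(3))

definition norming_map :: "((nat \<Rightarrow> real) \<Rightarrow> real) \<Rightarrow> (nat \<Rightarrow> real) \<Rightarrow> real" where
  "norming_map N x = max (supnorm x) (Sup (adm_set N x))"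

definition sandwiched_seminorm :: "((nat \<Rightarrow> real) \<Rightarrow> real) \<Rightarrow> bool" where
  "sandwiched_seminorm N \<longleftrightarrow> l1_dominated_seminorm N \<and> (\<forall>x\<in>c00. supnorm x \<le> N x)"

lemma sandwiched_seminorm_SUP:
  assumes "S \<noteq> {}" "S \<subseteq> {N. sandwiched_seminorm N}"
  shows "sandwiched_seminorm (\<lambda>x. SUP N\<in>S. N x)"
proof -
  have "l1_dominated_seminorm (\<lambda>x. SUP N\<in>S. N x)"
    using assms by (intro l1_dominated_seminorm_SUP[where T = "\<lambda>N. N"]) (auto simp: sandwiched_seminorm_def)
  moreover have "supnorm x \<le> (SUP N\<in>S. N x)" if "x \<in> c00" for x
  proof -
    from \<open>S \<noteq> {}\<close> obtain N\<^sub>0 where "N\<^sub>0 \<in> S" by blast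
    have "bdd_above ((\<lambda>N. N x) ` S)"
      using assms that by (intro bdd_above_l1_dominated[where T = "\<lambda>N. N"]) (auto simp: sandwiched_seminorm_def)
    then show ?thesis
      by (rule cSUP_upper2[OF _ \<open>N\<^sub>0 \<in> S\<close>])
        (use assms(2) that \<open>N\<^sub>0 \<in> S\<close> in \<open>auto simp: sandwiched_seminorm_def\<close>)
  qed
  ultimately show ?thesis by (simp add: sandwiched_seminorm_def)
qed

lemma Sup_pair_eq_max: "Sup {a, b} = max a (b :: real)"
  by (metis cSup_singleton cSup_insert bdd_above_insert bdd_above_empty insert_not_empty sup_max)

lemma sandwiched_seminorm_norming_map:
  assumes "sandwiched_seminorm N"
  shows "sandwiched_seminorm (norming_map N)"
proof -
  have "norming_map N = (\<lambda>x. SUP T\<in>{supnorm, \<lambda>x. Sup (adm_set N x)}. T x)"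
    by (simp add: fun_eq_iff norming_map_def Sup_pair_eq_max)
  moreover have "l1_dominated_seminorm (\<lambda>x. SUP T\<in>{supnorm, \<lambda>x. Sup (adm_set N x)}. T x)"
    using assms l1_dominated_seminorm_supnorm l1_dominated_seminorm_Sup_adm_set
    by (intro l1_dominated_seminorm_SUP[where T = "\<lambda>T. T"]) (auto simp: sandwiched_seminorm_def)
  ultimately have "l1_dominated_seminorm (norming_map N)" by (simp only:)
  then show ?thesis by (simp add: sandwiched_seminorm_def norming_map_def)
qed

lemma norming_map_mono:
  "l1_dominated_seminorm N' \<Longrightarrow> (\<And>z. z \<in> c00 \<Longrightarrow> N z \<le> N' z) \<Longrightarrow> x \<in> c00 \<Longrightarrow>
    norming_map N x \<le> norming_map N' x"
  unfolding norming_map_def by (simp add: Sup_adm_set_mono max.coboundedI2)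

lemma sandwiched_seminorm_is_norm_c00:
  assumes "sandwiched_seminorm N"
  shows "is_norm_c00 N"
proof -
  have N: "l1_dominated_seminorm N" and "\<And>x. x \<in> c00 \<Longrightarrow> supnorm x \<le> N x"
    using assms by (auto simp: sandwiched_seminorm_def)
  then have "x = (\<lambda>_. 0)" if "x \<in> c00" "N x = 0" for x
    using that supnorm_nonneg supnorm_eq_0D by (metis order.antisym)
  moreover have "N (\<lambda>_. 0) = 0"
    using l1_dominated_seminormD(3)[OF N, of "\<lambda>_. 0" 0] by (simp add: c00_def)
  ultimately show ?thesis
    using N unfolding is_norm_c00_def l1_dominated_seminorm_def by blast
qed

lemma sandwiched_fixpoint_of_norming_map:
  obtains N where "sandwiched_seminorm N" "\<forall>x\<in>c00. N x = norming_map N x"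
proof -
  have "\<exists>N\<in>{N. sandwiched_seminorm N}. \<forall>x\<in>c00. N x = norming_map N x"
  proof (rule fixpoint_of_SUP_closed_monotone[where B = l1norm and N\<^sub>0 = supnorm])
    fix N x assume "N \<in> {N. sandwiched_seminorm N}" "x \<in> c00"
    then show "N x \<le> l1norm x"
      by (auto simp: sandwiched_seminorm_def dest: l1_dominated_seminormD(2))
  next
    fix N N' x assume "N' \<in> {N. sandwiched_seminorm N}" "\<forall>y\<in>c00. N y \<le> N' y" "x \<in> c00"
    then show "norming_map N x \<le> norming_map N' x"
      by (auto simp: sandwiched_seminorm_def intro: norming_map_mono)
  next
    fix N assume "N \<in> {N. sandwiched_seminorm N}"
    then show "norming_map N \<in> {N. sandwiched_seminorm N}"
      by (simp add: sandwiched_seminorm_norming_map)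
  next
    show "supnorm \<in> {N. sandwiched_seminorm N}"
      by (simp add: sandwiched_seminorm_def l1_dominated_seminorm_supnorm)
  qed (auto simp: norming_map_def intro: sandwiched_seminorm_SUP)
  with that show ?thesis by blast
qed

theorem proposition2p3:
  shows "\<exists>N. is_norm_c00 N \<and>
           (\<forall>x\<in>c00. bdd_above (adm_set N x) \<and>
                     N x = max (supnorm x) (Sup (adm_set N x)))"
proof -
  obtain N where N: "sandwiched_seminorm N" and fixed: "\<forall>x\<in>c00. N x = norming_map N x"
    by (rule sandwiched_fixpoint_of_norming_map)
  show ?thesis
  proof (intro exI conjI ballI)
    show "is_norm_c00 N" by (rule sandwiched_seminorm_is_norm_c00[OF N])
    fix x assume "x \<in> c00"
    then show "bdd_above (adm_set N x)"
      using N by (simp add: sandwiched_seminorm_def bdd_above_adm_set)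
    show "N x = max (supnorm x) (Sup (adm_set N x))"
      using fixed \<open>x \<in> c00\<close> by (simp add: norming_map_def)
  qed
qed

end
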